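(* Fix $n$ and let $\mathbf{A}\mathbf{x}=\mathbf{b}$ be the linear system described in the context, and let $\mathbf{x}^{RSD}$ be the vector representing random serial dictatorship (so $\mathbf{A}\mathbf{x}^{RSD}=\mathbf{b}$). Let $\mathbf{y}\neq\mathbf{x}^{RSD}$ be any solution of $\mathbf{A}\mathbf{x}=\mathbf{b}$. Then there exists $\lambda>0$ such that $\lambda\mathbf{y}+(1-\lambda)\mathbf{x}^{RSD}$ represents an assignment rule (i.e. all entries are nonnegative, so each $f(R)$ is bistochastic) which satisfies equal treatment of equals, support efficiency and localizedness, and which differs from RSD.
   Context: Let $N$ be a set of $n$ agents and $H$ a set of $n$ houses. A preference profile $R$ assigns to each agent a strict linear order $\succ_i$ over $H$; $\mathcal{R}$ is the set of all $n!^n$ profiles. An assignment rule $f$ maps each profile to a bistochastic $n\times n$ matrix; $f(R,i,h)$ is the probability that agent $i$ gets house $h$. Such a rule is identified with the vector $\mathbf{x}\in\mathbb{R}^{n^2n!^n}$ with $\mathbf{x}_{(R,i,h)}=f(R,i,h)$. For a priority order $\pi$ of the agents, serial dictatorship $SD_\pi$ lets agents in order $\pi$ successively take their most preferred remaining house, and $RSD(R)=\frac1{n!}\sum_\pi SD_\pi(R)$. Properties: support efficiency: $RSD(R,i,h)=0\Rightarrow f(R,i,h)=0$; localizedness: whenever $R'$ arises from $R$ by agent $i$ swapping two houses $h_k,h_l$ that are adjacent in $\succ_i$ (all other agents unchanged), $f(R,i,h)=f(R',i,h)$ for all $h\notin\{h_k,h_l\}$; equal treatment of equals: $\succ_i=\succ_j$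 implies $f(R,i,h)=f(R,j,h)$ for all $h$. The system $\mathbf{A}\mathbf{x}=\mathbf{b}$ (with unknown $\mathbf{x}\in\mathbb{R}^{n^2n!^n}$ indexed by triples $(R,i,h)$) consists exactly of the following equations: (1) $\sum_{h\in H}\mathbf{x}_{(R,i,h)}=1$ for every $R,i$, and $\sum_{i\in N}\mathbf{x}_{(R,i,h)}=1$ for every $R,h$; (2) $\mathbf{x}_{(R,i,h)}=0$ for every $(R,i,h)$ with $RSD(R,i,h)=0$; (3) $\mathbf{x}_{(R,i,h)}-\mathbf{x}_{(R',i,h)}=0$ for every $R$, $i$, every profile $R'$ obtained from $R$ by agent $i$ swapping two adjacent houses in her ranking, and every house $h$ not among the two swapped houses; (4) $\mathbf{x}_{(R,i,h)}-\mathbf{x}_{(R,j,h)}=0$ for every $R$, $h$ and agents $i\neq j$ with $\succ_i=\succ_j$. *)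

theory Defs
  imports Complex_Main
begin

text \<open>Agents and houses are both encoded as the natural numbers 0..n-1.
A strict preference order of an agent is a list of all houses (a permutation of
[0..<n]), most preferred first. A profile is a list of n such preference lists
(entry i = preference of agent i). A (candidate) assignment rule / vector x is
a function profile => agent => house => real; only the coordinates (R,i,h) with
R a profile and i,h < n are meaningful (these are exactly the n^2 n!^n
coordinates of the vector in the paper).\<close>

type_synonym pref = "nat list"
type_synonym profile = "nat list list"
type_synonym vec = "profile \<Rightarrow> nat \<Rightarrow> nat \<Rightarrow> real"

definition is_pref :: "nat \<Rightarrow> pref \<Rightarrow> bool" where
  "is_pref n p \<longleftrightarrow> distinct p \<and> set p = {..<n}"

definition profiles :: "nat \<Rightarrow> profile set" where
  "profiles n = {R. length R = n \<and> (\<forall>i<n. is_pref n (R ! i))}"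

text \<open>Priority orders of agents: permutations of the agents, first = highest priority.\<close>
definition priority_orders :: "nat \<Rightarrow> nat list set" where
  "priority_orders n = {\<pi>. distinct \<pi> \<and> set \<pi> = {..<n}}"

fun sd_aux :: "nat list \<Rightarrow> profile \<Rightarrow> nat set \<Rightarrow> (nat \<times> nat) list" where
  "sd_aux [] R T = []"
| "sd_aux (i # is) R T =
     (let h = hd (filter (\<lambda>h. h \<notin> T) (R ! i)) in (i, h) # sd_aux is R (insert h T))"

definition SD :: "nat list \<Rightarrow> vec" where
  "SD \<pi> R i h = (if (i, h) \<in> set (sd_aux \<pi> R {}) then 1 else 0)"

definition RSD :: "nat \<Rightarrow> vec" where
  "RSD n R i h = (\<Sum>\<pi>\<in>priority_orders n. SD \<pi> R i h) / fact n"

definition swap_adj :: "pref \<Rightarrow> nat \<Rightarrow> pref" where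
  "swap_adj p k = p[k := p ! Suc k, Suc k := p ! k]"

definition swap_profile :: "profile \<Rightarrow> nat \<Rightarrow> nat \<Rightarrow> profile" where
  "swap_profile R i k = R[i := swap_adj (R ! i) k]"

definition eq_bistochastic :: "nat \<Rightarrow> vec \<Rightarrow> bool" where
  "eq_bistochastic n x \<longleftrightarrow>
     (\<forall>R\<in>profiles n. \<forall>i<n. (\<Sum>h<n. x R i h) = 1) \<and>
     (\<forall>R\<in>profiles n. \<forall>h<n. (\<Sum>i<n. x R i h) = 1)"

definition eq_support :: "nat \<Rightarrow> vec \<Rightarrow> bool" where
  "eq_support n x \<longleftrightarrow>
     (\<forall>R\<in>profiles n. \<forall>i<n. \<forall>h<n. RSD n R i h = 0 \<longrightarrow> x R i h = 0)"

definition eq_local :: "nat \<Rightarrow> vec \<Rightarrow> bool" where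
  "eq_local n x \<longleftrightarrow>
     (\<forall>R\<in>profiles n. \<forall>i<n. \<forall>k. Suc k < n \<longrightarrow>
        (\<forall>h<n. h \<noteq> R ! i ! k \<and> h \<noteq> R ! i ! Suc k \<longrightarrow>
           x R i h - x (swap_profile R i k) i h = 0))"

definition eq_ete :: "nat \<Rightarrow> vec \<Rightarrow> bool" where
  "eq_ete n x \<longleftrightarrow>
     (\<forall>R\<in>profiles n. \<forall>h<n. \<forall>i<n. \<forall>j<n. i \<noteq> j \<and> R ! i = R ! j \<longrightarrow>
        x R i h - x R j h = 0)"

definition solves_system :: "nat \<Rightarrow> vec \<Rightarrow> bool" where
  "solves_system n x \<longleftrightarrow> eq_bistochastic n x \<and> eq_support n x \<and> eq_local n x \<and> eq_ete n x"

definition differs :: "nat \<Rightarrow> vec \<Rightarrow> vec \<Rightarrow> bool" where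
  "differs n x y \<longleftrightarrow> (\<exists>R\<in>profiles n. \<exists>i<n. \<exists>h<n. x R i h \<noteq> y R i h)"

definition bistochastic :: "nat \<Rightarrow> (nat \<Rightarrow> nat \<Rightarrow> real) \<Rightarrow> bool" where
  "bistochastic n M \<longleftrightarrow> (\<forall>i<n. \<forall>h<n. M i h \<ge> 0) \<and>
     (\<forall>i<n. (\<Sum>h<n. M i h) = 1) \<and> (\<forall>h<n. (\<Sum>i<n. M i h) = 1)"

definition assignment_rule :: "nat \<Rightarrow> vec \<Rightarrow> bool" where
  "assignment_rule n f \<longleftrightarrow> (\<forall>R\<in>profiles n. bistochastic n (f R))"

definition support_efficient :: "nat \<Rightarrow> vec \<Rightarrow> bool" where
  "support_efficient n f \<longleftrightarrow>
     (\<forall>R\<in>profiles n. \<forall>i<n. \<forall>h<n. RSD n R i h = 0 \<longrightarrow> f R i h = 0)"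

definition localized :: "nat \<Rightarrow> vec \<Rightarrow> bool" where
  "localized n f \<longleftrightarrow>
     (\<forall>R\<in>profiles n. \<forall>i<n. \<forall>k. Suc k < n \<longrightarrow>
        (\<forall>h<n. h \<notin> {R ! i ! k, R ! i ! Suc k} \<longrightarrow> f R i h = f (swap_profile R i k) i h))"

definition equal_treatment :: "nat \<Rightarrow> vec \<Rightarrow> bool" where
  "equal_treatment n f \<longleftrightarrow>
     (\<forall>R\<in>profiles n. \<forall>i<n. \<forall>j<n. R ! i = R ! j \<longrightarrow> (\<forall>h<n. f R i h = f R j h))"

end

theory Submission
  imports Defs "HOL-Combinatorics.Multiset_Permutations"
begin

(* Every serial dictatorship produces a permutation matrix, so RSD, their average, is bistochastic;
   relabelling two agents with equal preferences permutes the priority orders, which gives equal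
   treatment; and swapping two adjacent houses other than h cannot change whether agent i picks h,
   which gives localizedness. Hence RSD solves the system. The system is affine, so every point
   t y + (1 - t) RSD solves it as well and, for t > 0, differs from RSD, and a solution is a rule with
   the three properties as soon as its entries are nonnegative. These stay nonnegative for small
   t > 0: at the finitely many coordinates where RSD vanishes the support equations force y to
   vanish too, and at all others RSD is strictly positive. *)

lemma priority_orders_eq: "priority_orders n = permutations_of_set {..<n}"
  unfolding priority_orders_def permutations_of_set_def by auto

lemma finite_profiles: "finite (profiles n)"
proof (rule finite_subset)
  show "profiles n \<subseteq> {R. set R \<subseteq> permutations_of_set {..<n} \<and> length R = n}"
    by (auto simp: profiles_def is_pref_def permutations_of_set_def subset_code(1) all_set_conv_all_nth)
  show "finite {R. set R \<subseteq> permutations_of_set {..<n} \<and> length R = n}"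
    by (simp add: finite_lists_length_eq)
qed

lemma map_fst_sd_aux: "map fst (sd_aux \<pi> R T) = \<pi>"
  by (induction \<pi> arbitrary: T) (auto simp: Let_def)

lemma sd_aux_houses:
  assumes "\<forall>a\<in>set \<pi>. is_pref n (R ! a)" "finite T" "T \<subseteq> {..<n}" "card T + length \<pi> \<le> n"
  shows "distinct (map snd (sd_aux \<pi> R T)) \<and> set (map snd (sd_aux \<pi> R T)) \<subseteq> {..<n} - T"
  using assms
proof (induction \<pi> arbitrary: T)
  case Nil
  then show ?case by simp
next
  case (Cons a \<pi>)
  define h where "h = hd (filter (\<lambda>h. h \<notin> T) (R ! a))"
  have pref: "is_pref n (R ! a)"
    using Cons.prems by simp
  have "card T < card {..<n}"
    using Cons.prems by simp
  then have "\<not> {..<n} \<subseteq> T"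
    using card_mono[OF \<open>finite T\<close>] leD by blast
  then obtain x where "x < n" "x \<notin> T"
    by auto
  then have "filter (\<lambda>h. h \<notin> T) (R ! a) \<noteq> []"
    using pref by (auto simp: is_pref_def filter_empty_conv)
  then have "h \<in> set (filter (\<lambda>h. h \<notin> T) (R ! a))"
    unfolding h_def by (rule list.set_sel(1))
  then have h: "h \<notin> T" "h < n"
    using pref by (auto simp: is_pref_def)
  have "distinct (map snd (sd_aux \<pi> R (insert h T))) \<and>
      set (map snd (sd_aux \<pi> R (insert h T))) \<subseteq> {..<n} - insert h T"
    using Cons.prems h by (intro Cons.IH) auto
  then show ?case
    using h by (auto simp: Let_def h_def[symmetric])
qed

lemma sd_aux_bijection:
  assumes "\<pi> \<in> priority_orders n" "R \<in> profiles n"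
  defines "L \<equiv> sd_aux \<pi> R {}"
  shows "distinct (map fst L)" "distinct (map snd L)" "fst ` set L = {..<n}" "snd ` set L = {..<n}"
proof -
  have \<pi>: "distinct \<pi>" "set \<pi> = {..<n}" "length \<pi> = n"
    using assms(1) by (auto simp: priority_orders_def distinct_card[symmetric])
  have "distinct (map snd L) \<and> set (map snd L) \<subseteq> {..<n}"
    unfolding L_def using sd_aux_houses[of \<pi> n R "{}"] assms(2) \<pi> by (auto simp: profiles_def)
  moreover have "length (map snd L) = n"
    using \<pi> map_fst_sd_aux[of \<pi> R "{}"] unfolding L_def by (metis length_map)
  ultimately show "distinct (map snd L)" "snd ` set L = {..<n}"
    by (auto simp del: set_map simp: set_map[symmetric] card_subset_eq distinct_card)
  show "distinct (map fst L)" "fst ` set L = {..<n}"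
    using \<pi> map_fst_sd_aux[of \<pi> R "{}"] unfolding L_def by (metis set_map)+
qed

lemma sum_indicator_functional_graph:
  assumes "distinct (map fst L)" "(a, b) \<in> set L" "b \<in> B" "finite B"
  shows "(\<Sum>y\<in>B. if (a, y) \<in> set L then 1 else 0 :: real) = 1"
proof -
  have "(a, y) \<in> set L \<longleftrightarrow> y = b" for y
    using assms(1,2) eq_key_imp_eq_value by metis
  then show ?thesis
    using assms(3,4) by simp
qed

lemma SD_bistochastic:
  assumes "\<pi> \<in> priority_orders n" "R \<in> profiles n"
  shows "bistochastic n (SD \<pi> R)"
proof -
  define L where "L = sd_aux \<pi> R {}"
  note L = sd_aux_bijection[OF assms, folded L_def]
  have "(\<Sum>h<n. SD \<pi> R i h) = 1" if "i < n" for i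
  proof -
    have "i \<in> fst ` set L"
      using L(3) \<open>i < n\<close> by simp
    then obtain h where "(i, h) \<in> set L"
      by force
    moreover have "h < n"
      using L(4) calculation by force
    ultimately show ?thesis
      unfolding SD_def L_def[symmetric] using L(1) by (intro sum_indicator_functional_graph) auto
  qed
  moreover have "(\<Sum>i<n. SD \<pi> R i h) = 1" if "h < n" for h
  proof -
    have swap_mem: "(h, i) \<in> set (map prod.swap L) \<longleftrightarrow> (i, h) \<in> set L" for i
      by force
    have "h \<in> snd ` set L"
      using L(4) \<open>h < n\<close> by simp
    then obtain i where "(h, i) \<in> set (map prod.swap L)"
      by force
    moreover have "i < n"
      using L(3) calculation by force
    moreover have "distinct (map fst (map prod.swap L))"
      using L(2) by (simp add: comp_def)
    ultimately have "(\<Sum>i<n. if (h, i) \<in> set (map prod.swap L) then 1 else 0 :: real) = 1"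
      by (intro sum_indicator_functional_graph) auto
    then show ?thesis
      unfolding SD_def L_def[symmetric] swap_mem .
  qed
  ultimately show ?thesis
    by (simp add: bistochastic_def SD_def)
qed

lemma bistochastic_average:
  assumes "finite P" "P \<noteq> {}" "\<And>p. p \<in> P \<Longrightarrow> bistochastic n (M p)"
  shows "bistochastic n (\<lambda>i h. (\<Sum>p\<in>P. M p i h) / card P)"
proof -
  have "(\<Sum>h<n. \<Sum>p\<in>P. M p i h) = card P" if "i < n" for i
    using assms(3) that by (subst sum.swap) (simp add: bistochastic_def)
  moreover have "(\<Sum>i<n. \<Sum>p\<in>P. M p i h) = card P" if "h < n" for h
    using assms(3) that by (subst sum.swap) (simp add: bistochastic_def)
  moreover have "0 \<le> (\<Sum>p\<in>P. M p i h)" if "i < n" "h < n" for i h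
    using assms(3) that by (intro sum_nonneg) (simp add: bistochastic_def)
  ultimately show ?thesis
    using assms(1,2) by (simp add: bistochastic_def sum_divide_distrib[symmetric])
qed

lemma RSD_eq_average:
  "RSD n R = (\<lambda>i h. (\<Sum>\<pi>\<in>priority_orders n. SD \<pi> R i h) / card (priority_orders n))"
  by (simp add: RSD_def priority_orders_eq fun_eq_iff)

lemma assignment_rule_RSD: "assignment_rule n (RSD n)"
  unfolding assignment_rule_def RSD_eq_average
proof
  fix R assume "R \<in> profiles n"
  then show "bistochastic n (\<lambda>i h. (\<Sum>\<pi>\<in>priority_orders n. SD \<pi> R i h) / card (priority_orders n))"
    by (intro bistochastic_average SD_bistochastic) (auto simp: priority_orders_eq)
qed

lemma sd_aux_rename_agents:
  assumes "\<And>a. R ! \<sigma> a = R ! a"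
  shows "sd_aux (map \<sigma> \<pi>) R T = map (apfst \<sigma>) (sd_aux \<pi> R T)"
  using assms by (induction \<pi> arbitrary: T) (auto simp: Let_def)

lemma SD_rename_agents:
  assumes "\<And>a. R ! \<sigma> a = R ! a" "inj \<sigma>"
  shows "SD (map \<sigma> \<pi>) R (\<sigma> a) h = SD \<pi> R a h"
proof -
  have "(\<sigma> a, h) \<in> apfst \<sigma> ` set (sd_aux \<pi> R {}) \<longleftrightarrow> (a, h) \<in> set (sd_aux \<pi> R {})"
    using inj_image_mem_iff[of "apfst \<sigma>" "(a, h)"] \<open>inj \<sigma>\<close> by (simp add: inj_apfst)
  then show ?thesis
    unfolding SD_def sd_aux_rename_agents[OF assms(1)] by simp
qed

lemma equal_treatment_RSD: "equal_treatment n (RSD n)"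
  unfolding equal_treatment_def
proof (intro ballI allI impI)
  fix R i j h
  assume "R \<in> profiles n" "i < n" "j < n" "R ! i = R ! j"
  define \<sigma> where "\<sigma> = Transposition.transpose i j"
  have same_pref: "R ! \<sigma> a = R ! a" for a
    using \<open>R ! i = R ! j\<close> by (simp add: \<sigma>_def transpose_def)
  have "\<sigma> permutes {..<n}"
    unfolding \<sigma>_def using \<open>i < n\<close> \<open>j < n\<close> by (simp add: permutes_swap_id)
  then have orders: "map \<sigma> ` priority_orders n = priority_orders n"
    by (simp add: priority_orders_eq permutations_of_set_image_permutes)
  have "inj \<sigma>" "\<sigma> i = j"
    by (simp_all add: \<sigma>_def)
  then have "inj_on (map \<sigma>) (priority_orders n)"
    by (meson inj_mapI inj_on_subset subset_UNIV)
  then have "(\<Sum>\<pi>\<in>priority_orders n. SD \<pi> R j h) = (\<Sum>\<pi>\<in>priority_orders n. SD (map \<sigma> \<pi>) R (\<sigma> i) h)"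
    using sum.reindex[of "map \<sigma>" "priority_orders n" "\<lambda>\<pi>. SD \<pi> R j h"] orders \<open>\<sigma> i = j\<close> by simp
  also have "\<dots> = (\<Sum>\<pi>\<in>priority_orders n. SD \<pi> R i h)"
    by (simp add: SD_rename_agents[OF same_pref \<open>inj \<sigma>\<close>])
  finally show "RSD n R i h = RSD n R j h"
    by (simp add: RSD_def)
qed

lemma hd_filter_swap_adjacent:
  assumes "h \<noteq> a" "h \<noteq> b"
  shows "hd (filter P (xs @ a # b # ys)) = h \<longleftrightarrow> hd (filter P (xs @ b # a # ys)) = h"
  using assms by (cases "filter P xs") auto

lemma swap_adj_eq_append:
  assumes "Suc k < length p"
  shows "p = take k p @ p ! k # p ! Suc k # drop (Suc (Suc k)) p"
    and "swap_adj p k = take k p @ p ! Suc k # p ! k # drop (Suc (Suc k)) p"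
proof -
  show p: "p = take k p @ p ! k # p ! Suc k # drop (Suc (Suc k)) p"
    using assms by (metis Cons_nth_drop_Suc Suc_lessD append_take_drop_id)
  show "swap_adj p k = take k p @ p ! Suc k # p ! k # drop (Suc (Suc k)) p"
    unfolding swap_adj_def using assms by (subst p) (simp add: list_update_append nth_append)
qed

text \<open>Agents before \<open>i\<close> choose as before; \<open>i\<close> gets \<open>h\<close> in both profiles or in neither,
  and whatever changes afterwards concerns only agents other than \<open>i\<close>.\<close>
lemma sd_aux_swap_profile:
  assumes "distinct \<pi>" "i < length R" "Suc k < length (R ! i)"
    and "h \<noteq> R ! i ! k" "h \<noteq> R ! i ! Suc k"
  shows "(i, h) \<in> set (sd_aux \<pi> R T) \<longleftrightarrow> (i, h) \<in> set (sd_aux \<pi> (swap_profile R i k) T)"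
  using assms(1)
proof (induction \<pi> arbitrary: T)
  case Nil
  then show ?case by simp
next
  case (Cons a \<pi>)
  show ?case
  proof (cases "a = i")
    case True
    have later: "(i, h') \<notin> set (sd_aux \<pi> R' T')" for h' R' T'
      using Cons.prems True map_fst_sd_aux[of \<pi> R' T'] by (metis distinct.simps(2) fst_conv image_eqI list.set_map)
    have "swap_profile R i k ! i = swap_adj (R ! i) k"
      unfolding swap_profile_def using assms(2) by simp
    moreover have "hd (filter (\<lambda>h. h \<notin> T) (R ! i)) = h \<longleftrightarrow> hd (filter (\<lambda>h. h \<notin> T) (swap_adj (R ! i) k)) = h"
      using hd_filter_swap_adjacent[OF assms(4,5)] swap_adj_eq_append[OF assms(3)] by metis
    ultimately show ?thesis
      using True later by (auto simp: Let_def)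
  next
    case False
    then have "swap_profile R i k ! a = R ! a"
      unfolding swap_profile_def by simp
    then show ?thesis
      using False Cons by (auto simp: Let_def)
  qed
qed

lemma localized_RSD: "localized n (RSD n)"
  unfolding localized_def
proof (intro ballI allI impI)
  fix R i k h
  assume "R \<in> profiles n" "i < n" "Suc k < n" "h < n" "h \<notin> {R ! i ! k, R ! i ! Suc k}"
  moreover have "length R = n" "Suc k < length (R ! i)"
    using calculation by (auto simp: profiles_def is_pref_def distinct_card[symmetric])
  ultimately have "SD \<pi> R i h = SD \<pi> (swap_profile R i k) i h" if "\<pi> \<in> priority_orders n" for \<pi>
    using sd_aux_swap_profile[of \<pi> i R k h "{}"] that by (simp add: SD_def priority_orders_def)
  then show "RSD n R i h = RSD n (swap_profile R i k) i h"
    by (simp add: RSD_def)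
qed

lemma eq_bistochastic_iff_assignment_rule:
  "(eq_bistochastic n f \<and> (\<forall>R\<in>profiles n. \<forall>i<n. \<forall>h<n. 0 \<le> f R i h)) \<longleftrightarrow> assignment_rule n f"
  by (auto simp: eq_bistochastic_def assignment_rule_def bistochastic_def)

lemma eq_support_iff_support_efficient: "eq_support n f \<longleftrightarrow> support_efficient n f"
  by (simp add: eq_support_def support_efficient_def)

lemma eq_local_iff_localized: "eq_local n f \<longleftrightarrow> localized n f"
  by (simp add: eq_local_def localized_def)

lemma eq_ete_iff_equal_treatment: "eq_ete n f \<longleftrightarrow> equal_treatment n f"
  by (auto simp: eq_ete_def equal_treatment_def)

lemma nonneg_solution_iff_rule:
  "(solves_system n f \<and> (\<forall>R\<in>profiles n. \<forall>i<n. \<forall>h<n. 0 \<le> f R i h)) \<longleftrightarrow>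
     assignment_rule n f \<and> equal_treatment n f \<and> support_efficient n f \<and> localized n f"
  by (auto simp: solves_system_def eq_bistochastic_iff_assignment_rule[symmetric]
      eq_support_iff_support_efficient eq_local_iff_localized eq_ete_iff_equal_treatment)

lemma solves_system_RSD: "solves_system n (RSD n)"
  using nonneg_solution_iff_rule[of n "RSD n"]
  by (simp add: assignment_rule_RSD equal_treatment_RSD localized_RSD support_efficient_def)

lemma solves_system_affine_combination:
  assumes "solves_system n x" "solves_system n y"
  shows "solves_system n (\<lambda>R i h. t * y R i h + (1 - t) * x R i h)"
proof -
  have "eq_bistochastic n (\<lambda>R i h. t * y R i h + (1 - t) * x R i h)"
    using assms by (simp add: solves_system_def eq_bistochastic_def sum.distrib sum_distrib_left[symmetric])
  moreover have "eq_support n (\<lambda>R i h. t * y R i h + (1 - t) * x R i h)"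
    using assms by (simp add: solves_system_def eq_support_def)
  moreover have "eq_local n (\<lambda>R i h. t * y R i h + (1 - t) * x R i h)"
    unfolding eq_local_def
  proof (intro ballI allI impI)
    fix R i k h
    assume "R \<in> profiles n" "i < n" "Suc k < n" "h < n" "h \<noteq> R ! i ! k \<and> h \<noteq> R ! i ! Suc k"
    then have "x R i h - x (swap_profile R i k) i h = 0" "y R i h - y (swap_profile R i k) i h = 0"
      using assms unfolding solves_system_def eq_local_def by blast+
    then show "t * y R i h + (1 - t) * x R i h -
        (t * y (swap_profile R i k) i h + (1 - t) * x (swap_profile R i k) i h) = 0"
      by simp
  qed
  moreover have "eq_ete n (\<lambda>R i h. t * y R i h + (1 - t) * x R i h)"
    unfolding eq_ete_def
  proof (intro ballI allI impI)
    fix R h i j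
    assume "R \<in> profiles n" "h < n" "i < n" "j < n" "i \<noteq> j \<and> R ! i = R ! j"
    then have "x R i h - x R j h = 0" "y R i h - y R j h = 0"
      using assms unfolding solves_system_def eq_ete_def by blast+
    then show "t * y R i h + (1 - t) * x R i h - (t * y R j h + (1 - t) * x R j h) = 0"
      by simp
  qed
  ultimately show ?thesis
    by (simp add: solves_system_def)
qed

lemma differs_affine_combination:
  assumes "t \<noteq> 0" "differs n y x"
  shows "differs n (\<lambda>R i h. t * y R i h + (1 - t) * x R i h) x"
  using assms by (auto simp: differs_def algebra_simps)

lemma exists_pos_step_nonneg:
  fixes x y :: "'a \<Rightarrow> real"
  assumes "finite S" "\<And>p. p \<in> S \<Longrightarrow> 0 \<le> x p" "\<And>p. p \<in> S \<Longrightarrow> x p = 0 \<Longrightarrow> y p = 0"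
  shows "\<exists>t>0. \<forall>p\<in>S. 0 \<le> t * y p + (1 - t) * x p"
proof -
  have "eventually (\<lambda>t. 0 \<le> t * y p + (1 - t) * x p) (at_right 0)" if "p \<in> S" for p
  proof (cases "x p = 0")
    case True
    then show ?thesis
      using assms(3) that by simp
  next
    case False
    have "((\<lambda>t. t * y p + (1 - t) * x p) \<longlongrightarrow> 0 * y p + (1 - 0) * x p) (at_right 0)"
      by (intro tendsto_intros)
    moreover have "0 < 0 * y p + (1 - 0) * x p"
      using False assms(2)[OF that] by simp
    ultimately show ?thesis
      by (rule order_tendstoD(1)[THEN eventually_mono]) simp
  qed
  then have "eventually (\<lambda>t. 0 < t \<and> (\<forall>p\<in>S. 0 \<le> t * y p + (1 - t) * x p)) (at_right 0)"
    using assms(1) by (intro eventually_conj eventually_at_right_less eventually_ball_finite) auto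
  then show ?thesis
    using eventually_happens'[OF trivial_limit_at_right_real] by blast
qed

theorem mainTheorem3:
  fixes n :: nat and y :: vec
  assumes "solves_system n y"
    and "differs n y (RSD n)"
  shows "\<exists>t::real. t > 0 \<and>
     (let f = (\<lambda>R i h. t * y R i h + (1 - t) * RSD n R i h) in
        assignment_rule n f \<and> equal_treatment n f \<and> support_efficient n f \<and>
        localized n f \<and> differs n f (RSD n))"
proof -
  have "\<forall>R\<in>profiles n. \<forall>i<n. \<forall>h<n. RSD n R i h = 0 \<longrightarrow> y R i h = 0"
    using assms(1) by (simp add: solves_system_def eq_support_def)
  moreover have "\<forall>R\<in>profiles n. \<forall>i<n. \<forall>h<n. 0 \<le> RSD n R i h"
    using assignment_rule_RSD by (simp add: assignment_rule_def bistochastic_def)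
  ultimately obtain t :: real where "t > 0" and nonneg:
    "\<forall>(R, i, h)\<in>profiles n \<times> {..<n} \<times> {..<n}. 0 \<le> t * y R i h + (1 - t) * RSD n R i h"
    using exists_pos_step_nonneg[of "profiles n \<times> {..<n} \<times> {..<n}"
        "\<lambda>(R, i, h). RSD n R i h" "\<lambda>(R, i, h). y R i h"]
    by (auto simp: finite_profiles)
  define f where "f = (\<lambda>R i h. t * y R i h + (1 - t) * RSD n R i h)"
  have "solves_system n f"
    unfolding f_def using solves_system_RSD assms(1) by (rule solves_system_affine_combination)
  moreover have "\<forall>R\<in>profiles n. \<forall>i<n. \<forall>h<n. 0 \<le> f R i h"
    using nonneg by (auto simp: f_def)
  moreover have "differs n f (RSD n)"
    unfolding f_def using \<open>t > 0\<close> assms(2) by (intro differs_affine_combination) auto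
  ultimately show ?thesis
    using \<open>t > 0\<close> nonneg_solution_iff_rule[of n f] by (auto simp: f_def Let_def)
qed

end
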